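(* Let $\{G_i\}_{i\in I}$ be a family of profinite-$C$ groups. Then the cartesian product $\mathrm{Cr}_{i\in I}\,G_i$ (with the product topology) is a profinite-$C$ group. As a consequence, the inverse limit of any inverse system of profinite-$C$ groups (with continuous homomorphisms) is a profinite-$C$ group.
   Context: A permutable complement of a subgroup $H$ of a group $G$ is a subgroup $K$ with $G=HK$ and $H\cap K=1$. A profinite group $G$ is a profinite-$C$ group if every closed subgroup of $G$ has a closed permutable complement in $G$. $\mathrm{Cr}_{i\in I}\,G_i$ denotes the full cartesian product. *)

theory Defs
  imports "HOL-Analysis.Analysis" "HOL-Algebra.Algebra"
begin

definition totally_disconnected_space :: "'a topology \<Rightarrow> bool" where
  "totally_disconnected_space Y \<longleftrightarrow>
     (\<forall>S. connectedin Y S \<longrightarrow> (\<exists>z. S \<subseteq> {z}))"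

definition topological_group :: "('a, 'b) monoid_scheme \<Rightarrow> 'a topology \<Rightarrow> bool" where
  "topological_group G T \<longleftrightarrow>
     group G \<and> topspace T = carrier G \<and>
     continuous_map (prod_topology T T) T (\<lambda>(x, y). x \<otimes>\<^bsub>G\<^esub> y) \<and>
     continuous_map T T (\<lambda>x. inv\<^bsub>G\<^esub> x)"

definition profinite_group :: "('a, 'b) monoid_scheme \<Rightarrow> 'a topology \<Rightarrow> bool" where
  "profinite_group G T \<longleftrightarrow>
     topological_group G T \<and> compact_space T \<and> Hausdorff_space T \<and>
     totally_disconnected_space T"

definition permutable_complement :: "('a, 'b) monoid_scheme \<Rightarrow> 'a set \<Rightarrow> 'a set \<Rightarrow> bool" where
  "permutable_complement G H K \<longleftrightarrow>
     subgroup K G \<and> H <#>\<^bsub>G\<^esub> K = carrier G \<and> H \<inter> K = {\<one>\<^bsub>G\<^esub>}"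

definition profinite_C_group :: "('a, 'b) monoid_scheme \<Rightarrow> 'a topology \<Rightarrow> bool" where
  "profinite_C_group G T \<longleftrightarrow>
     profinite_group G T \<and>
     (\<forall>H. subgroup H G \<and> closedin T H \<longrightarrow>
        (\<exists>K. closedin T K \<and> permutable_complement G H K))"

definition inverse_system ::
  "'i set \<Rightarrow> ('i \<Rightarrow> 'i \<Rightarrow> bool) \<Rightarrow> ('i \<Rightarrow> ('a, 'b) monoid_scheme) \<Rightarrow> ('i \<Rightarrow> 'a topology)
     \<Rightarrow> ('i \<Rightarrow> 'i \<Rightarrow> 'a \<Rightarrow> 'a) \<Rightarrow> bool" where
  "inverse_system I leq G T f \<longleftrightarrow>
     (\<forall>i\<in>I. leq i i) \<and>
     (\<forall>i\<in>I. \<forall>j\<in>I. \<forall>k\<in>I. leq i j \<and> leq j k \<longrightarrow> leq i k) \<and>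
     (\<forall>i\<in>I. \<forall>j\<in>I. \<exists>k\<in>I. leq i k \<and> leq j k) \<and>
     (\<forall>i\<in>I. topological_group (G i) (T i)) \<and>
     (\<forall>i\<in>I. \<forall>j\<in>I. leq j i \<longrightarrow>
        f i j \<in> hom (G i) (G j) \<and> continuous_map (T i) (T j) (f i j)) \<and>
     (\<forall>i\<in>I. \<forall>x\<in>carrier (G i). f i i x = x) \<and>
     (\<forall>i\<in>I. \<forall>j\<in>I. \<forall>k\<in>I. leq k j \<and> leq j i \<longrightarrow>
        (\<forall>x\<in>carrier (G i). f j k (f i j x) = f i k x))"

definition inv_limit_carrier ::
  "'i set \<Rightarrow> ('i \<Rightarrow> 'i \<Rightarrow> bool) \<Rightarrow> ('i \<Rightarrow> ('a, 'b) monoid_scheme) \<Rightarrow> ('i \<Rightarrow> 'i \<Rightarrow> 'a \<Rightarrow> 'a)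
     \<Rightarrow> ('i \<Rightarrow> 'a) set" where
  "inv_limit_carrier I leq G f =
     {x \<in> (\<Pi>\<^sub>E i\<in>I. carrier (G i)). \<forall>i\<in>I. \<forall>j\<in>I. leq j i \<longrightarrow> f i j (x i) = x j}"

definition inv_limit_group ::
  "'i set \<Rightarrow> ('i \<Rightarrow> 'i \<Rightarrow> bool) \<Rightarrow> ('i \<Rightarrow> ('a, 'b) monoid_scheme) \<Rightarrow> ('i \<Rightarrow> 'i \<Rightarrow> 'a \<Rightarrow> 'a)
     \<Rightarrow> ('i \<Rightarrow> 'a) monoid" where
  "inv_limit_group I leq G f =
     (product_group I G)\<lparr>carrier := inv_limit_carrier I leq G f\<rparr>"

definition inv_limit_topology ::
  "'i set \<Rightarrow> ('i \<Rightarrow> 'i \<Rightarrow> bool) \<Rightarrow> ('i \<Rightarrow> ('a, 'b) monoid_scheme) \<Rightarrow> ('i \<Rightarrow> 'a topology)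
     \<Rightarrow> ('i \<Rightarrow> 'i \<Rightarrow> 'a \<Rightarrow> 'a) \<Rightarrow> ('i \<Rightarrow> 'a) topology" where
  "inv_limit_topology I leq G T f =
     subtopology (product_topology T I) (inv_limit_carrier I leq G f)"

end

theory Submission
  imports Defs
begin

(* Well-order the index set I. For a closed subgroup H of the product, the i-th coordinates of
   those elements of H that are trivial at all indices below i form a closed subgroup of G i
   (a continuous image of a compact set), so they have a closed complement C i; the product K
   of the C i is a closed complement of H. An element of H inside K is trivial at its least
   nontrivial index, so H and K meet trivially. To write g = h k, h is built by transfinite
   induction, correcting it at index i by an element of H that is trivial below i; at limit
   stages and at the end, compactness of H gives a common point of the chain of nonempty
   closed sets of partial solutions.
   An inverse limit is a closed subgroup of the product, and closed subgroups inherit the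
   property: if K complements H in G and H <= L, then K \<inter> L complements H in L. *)

section \<open>Topological groups and their products\<close>

lemma continuous_map_group_mult:
  assumes "topological_group G T" "continuous_map Z T f" "continuous_map Z T g"
  shows "continuous_map Z T (\<lambda>z. f z \<otimes>\<^bsub>G\<^esub> g z)"
proof -
  have "continuous_map (prod_topology T T) T (\<lambda>(x, y). x \<otimes>\<^bsub>G\<^esub> y)"
    using assms(1) by (simp add: topological_group_def)
  from continuous_map_compose[OF continuous_map_pairedI[OF assms(2,3)] this] show ?thesis
    by (simp add: o_def)
qed

lemma continuous_map_group_inv:
  assumes "topological_group G T" "continuous_map Z T f"
  shows "continuous_map Z T (\<lambda>z. inv\<^bsub>G\<^esub> f z)"
proof -
  have "continuous_map T T (\<lambda>x. inv\<^bsub>G\<^esub> x)"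
    using assms(1) by (simp add: topological_group_def)
  from continuous_map_compose[OF assms(2) this] show ?thesis
    by (simp add: o_def)
qed

lemma compact_space_chain_Inter_nonempty:
  assumes "compact_space Y" "\<And>U. U \<in> \<U> \<Longrightarrow> closedin Y U \<and> U \<noteq> {}" "chain\<^sub>\<subseteq> \<U>"
  shows "\<Inter>\<U> \<noteq> {}"
proof -
  have "\<Inter>\<F> \<noteq> {}" if "finite \<F>" "\<F> \<subseteq> \<U>" for \<F>
  proof (cases "\<F> = {}")
    case False
    have "subset.chain UNIV \<F>"
      using assms(3) that(2) by (auto simp: chain_subset_alt_def subset.chain_def)
    then have "\<Inter>\<F> \<in> \<F>"
      using Inter_in_chain that(1) False by blast
    then show ?thesis using assms(2) that(2) by blast
  qed simp
  then show ?thesis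
    using assms(1,2) by (auto simp: compact_space_fip)
qed

lemma topspace_product_topology_group:
  assumes "\<And>i. i \<in> I \<Longrightarrow> topological_group (G i) (T i)"
  shows "topspace (product_topology T I) = carrier (product_group I G)"
  using assms by (simp add: topspace_product_topology topological_group_def cong: PiE_cong)

lemma topological_group_product:
  assumes tg: "\<And>i. i \<in> I \<Longrightarrow> topological_group (G i) (T i)"
  shows "topological_group (product_group I G) (product_topology T I)"
proof -
  let ?P = "product_group I G" and ?Y = "product_topology T I"
  have group: "group (G i)" if "i \<in> I" for i
    using tg[OF that] by (simp add: topological_group_def)
  have proj: "continuous_map Z (T k) (\<lambda>z. p z k)" if "continuous_map Z ?Y p" "k \<in> I" for Z p k
    using continuous_map_compose[OF that(1) continuous_map_product_projection[OF that(2)]]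
    by (simp add: o_def)
  have "continuous_map (prod_topology ?Y ?Y) ?Y (\<lambda>z. \<lambda>i\<in>I. fst z i \<otimes>\<^bsub>G i\<^esub> snd z i)"
    unfolding continuous_map_componentwise
    using continuous_map_group_mult[OF tg proj[OF continuous_map_fst] proj[OF continuous_map_snd]]
    by auto
  then have "continuous_map (prod_topology ?Y ?Y) ?Y (\<lambda>(x, y). x \<otimes>\<^bsub>?P\<^esub> y)"
    by (simp add: case_prod_unfold)
  moreover have "continuous_map ?Y ?Y (\<lambda>x. \<lambda>i\<in>I. inv\<^bsub>G i\<^esub> x i)"
    unfolding continuous_map_componentwise
    using continuous_map_group_inv[OF tg proj[OF continuous_map_id]] by auto
  then have "continuous_map ?Y ?Y (\<lambda>x. inv\<^bsub>?P\<^esub> x)"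
    by (rule continuous_map_eq)
      (simp add: group topspace_product_topology_group[OF tg] del: topspace_product_topology)
  ultimately show ?thesis
    using group topspace_product_topology_group[OF tg] by (simp add: topological_group_def)
qed

lemma totally_disconnected_space_product_topology:
  assumes "\<And>i. i \<in> I \<Longrightarrow> totally_disconnected_space (T i)"
  shows "totally_disconnected_space (product_topology T I)"
  unfolding totally_disconnected_space_def
proof (intro allI impI)
  fix S assume S: "connectedin (product_topology T I) S"
  have "x = y" if "x \<in> S" "y \<in> S" for x y
  proof (rule PiE_ext)
    show "x \<in> (\<Pi>\<^sub>E i\<in>I. topspace (T i))" "y \<in> (\<Pi>\<^sub>E i\<in>I. topspace (T i))"
      using connectedin_subset_topspace[OF S] that by auto
    fix k assume k: "k \<in> I"
    have "connectedin (T k) ((\<lambda>x. x k) ` S)"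
      using connectedin_continuous_map_image[OF continuous_map_product_projection[OF k] S] .
    then show "x k = y k"
      using assms[OF k] that unfolding totally_disconnected_space_def by blast
  qed
  then show "\<exists>z. S \<subseteq> {z}" by blast
qed

lemma profinite_group_product:
  assumes "\<And>i. i \<in> I \<Longrightarrow> profinite_group (G i) (T i)"
  shows "profinite_group (product_group I G) (product_topology T I)"
  using assms
  by (auto simp: profinite_group_def compact_space_product_topology Hausdorff_space_product_topology
      intro!: topological_group_product totally_disconnected_space_product_topology)

section \<open>Closed complements in products\<close>

locale closed_subgroup_of_profinite_product =
  fixes I :: "'i set" and G :: "'i \<Rightarrow> ('a, 'b) monoid_scheme" and T :: "'i \<Rightarrow> 'a topology"
    and H :: "('i \<Rightarrow> 'a) set" and R :: "'i rel"
  assumes profinite: "\<And>i. i \<in> I \<Longrightarrow> profinite_group (G i) (T i)"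
    and subgroup_H: "subgroup H (product_group I G)"
    and closedin_H: "closedin (product_topology T I) H"
    and strict_linear_order_R: "strict_linear_order_on I R"
    and wf_R: "wf R"
    and R_subset: "R \<subseteq> I \<times> I"
begin

abbreviation "P \<equiv> product_group I G"
abbreviation "Y \<equiv> product_topology T I"

lemma topological_group_G: "i \<in> I \<Longrightarrow> topological_group (G i) (T i)"
  using profinite by (simp add: profinite_group_def)

lemma group_G: "i \<in> I \<Longrightarrow> group (G i)"
  using topological_group_G by (simp add: topological_group_def)

lemma topspace_T: "i \<in> I \<Longrightarrow> topspace (T i) = carrier (G i)"
  using topological_group_G by (simp add: topological_group_def)

lemma group_P: "group P"
  using group_G by simp

lemma compact_space_Y: "compact_space Y"
  using profinite_group_product[of I G T] profinite by (simp add: profinite_group_def)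

lemma H_subset: "H \<subseteq> carrier P"
  using subgroup_H by (rule subgroup.subset)

lemma one_in_H: "\<one>\<^bsub>P\<^esub> \<in> H"
  using subgroup_H by (rule subgroup.one_closed)

lemma closedin_one: "i \<in> I \<Longrightarrow> closedin (T i) {\<one>\<^bsub>G i\<^esub>}"
  using profinite topspace_T group_G
  by (simp add: profinite_group_def closedin_Hausdorff_singleton group.is_monoid)

lemma hom_projection: "i \<in> I \<Longrightarrow> group_hom P (G i) (\<lambda>x. x i)"
  using group_G by (auto simp: group_hom_def group_hom_axioms_def hom_def)

definition tail :: "'i \<Rightarrow> ('i \<Rightarrow> 'a) set" where
  "tail i = H \<inter> (\<Pi>\<^sub>E j\<in>I. if (j, i) \<in> R then {\<one>\<^bsub>G j\<^esub>} else carrier (G j))"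

definition leading :: "'i \<Rightarrow> 'a set" where
  "leading i = (\<lambda>h. h i) ` tail i"

lemma mem_tail_iff: "h \<in> tail i \<longleftrightarrow> h \<in> H \<and> (\<forall>j\<in>I. (j, i) \<in> R \<longrightarrow> h j = \<one>\<^bsub>G j\<^esub>)"
  using H_subset by (auto simp: tail_def PiE_iff)

lemma subgroup_tail: "subgroup (tail i) P"
  unfolding tail_def
  by (intro subgroup_Int subgroup_H)
    (simp add: PiE_subgroup_product_group group_G group.triv_subgroup group.subgroup_self)

lemma closedin_tail: "closedin Y (tail i)"
  unfolding tail_def
  by (intro closedin_Int closedin_H)
    (auto simp: closedin_product_topology closedin_one simp flip: topspace_T)

lemma subgroup_leading: "i \<in> I \<Longrightarrow> subgroup (leading i) (G i)"
  unfolding leading_def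
  by (rule group_hom.subgroup_img_is_subgroup[OF hom_projection subgroup_tail])

lemma closedin_leading: "i \<in> I \<Longrightarrow> closedin (T i) (leading i)"
proof -
  assume i: "i \<in> I"
  have "compactin Y (tail i)"
    using compact_space_Y closedin_tail by (rule closedin_compact_space)
  then have "compactin (T i) (leading i)"
    unfolding leading_def by (rule image_compactin[OF _ continuous_map_product_projection[OF i]])
  then show ?thesis
    using profinite[OF i] compactin_imp_closedin by (auto simp: profinite_group_def)
qed

end

locale closed_subgroup_of_profinite_product_complement =
  closed_subgroup_of_profinite_product I G T H R
  for I :: "'i set" and G :: "'i \<Rightarrow> ('a, 'b) monoid_scheme" and T H R +
  fixes C :: "'i \<Rightarrow> 'a set"
  assumes closedin_C: "\<And>i. i \<in> I \<Longrightarrow> closedin (T i) (C i)"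
    and complement_C: "\<And>i. i \<in> I \<Longrightarrow> permutable_complement (G i) (leading i) (C i)"
begin

lemma subgroup_C: "i \<in> I \<Longrightarrow> subgroup (C i) (G i)"
  using complement_C by (simp add: permutable_complement_def)

lemma subgroup_PiE_C: "subgroup (Pi\<^sub>E I C) P"
  using subgroup_C group_G by (simp add: PiE_subgroup_product_group)

lemma closedin_PiE_C: "closedin Y (Pi\<^sub>E I C)"
  using closedin_C by (simp add: closedin_product_topology)

lemma Int_PiE_C: "H \<inter> Pi\<^sub>E I C = {\<one>\<^bsub>P\<^esub>}"
proof (rule ccontr)
  assume "H \<inter> Pi\<^sub>E I C \<noteq> {\<one>\<^bsub>P\<^esub>}"
  moreover have "\<one>\<^bsub>P\<^esub> \<in> H \<inter> Pi\<^sub>E I C"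
    using one_in_H subgroup.one_closed[OF subgroup_PiE_C] by (rule IntI)
  ultimately obtain h where h: "h \<in> H" "h \<in> Pi\<^sub>E I C" "h \<noteq> \<one>\<^bsub>P\<^esub>"
    by blast
  define support where "support = {i \<in> I. h i \<noteq> \<one>\<^bsub>G i\<^esub>}"
  have "support \<noteq> {}"
  proof
    assume "support = {}"
    then have "h = \<one>\<^bsub>P\<^esub>"
      using h(2) by (intro extensionalityI[of _ I]) (auto simp: support_def PiE_iff)
    with h(3) show False ..
  qed
  then obtain i0 where "i0 \<in> support" by blast
  then obtain i where i: "i \<in> support" and minimal: "\<And>j. (j, i) \<in> R \<Longrightarrow> j \<notin> support"
    using wfE_min[OF wf_R \<open>i0 \<in> support\<close>] by blast
  have "h \<in> tail i"
    unfolding mem_tail_iff using h(1) minimal by (auto simp: support_def)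
  then have "h i \<in> leading i \<inter> C i"
    using h(2) i by (auto simp: leading_def support_def)
  moreover have "leading i \<inter> C i = {\<one>\<^bsub>G i\<^esub>}"
    using complement_C i by (simp add: permutable_complement_def support_def)
  ultimately show False
    using i by (simp add: support_def)
qed

text \<open>The partial solutions of \<open>g = h \<otimes> k\<close> with \<open>h \<in> H\<close> and \<open>k \<in> Pi\<^sub>E I C\<close> on the
  coordinates in \<open>S\<close>.\<close>
definition matching :: "('i \<Rightarrow> 'a) \<Rightarrow> 'i set \<Rightarrow> ('i \<Rightarrow> 'a) set" where
  "matching g S = H \<inter>
     (\<Pi>\<^sub>E j\<in>I. if j \<in> S then {x \<in> carrier (G j). inv\<^bsub>G j\<^esub> x \<otimes>\<^bsub>G j\<^esub> g j \<in> C j}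
               else carrier (G j))"

lemma mem_matching_iff:
  "h \<in> matching g S \<longleftrightarrow> h \<in> H \<and> (\<forall>j\<in>S \<inter> I. inv\<^bsub>G j\<^esub> h j \<otimes>\<^bsub>G j\<^esub> g j \<in> C j)"
  using H_subset by (auto simp: matching_def PiE_iff)

lemma matching_subset: "matching g S \<subseteq> H"
  by (simp add: matching_def)

lemma matching_antimono: "S \<subseteq> S' \<Longrightarrow> matching g S' \<subseteq> matching g S"
  unfolding subset_iff mem_matching_iff by blast

lemma matching_UN: "matching g (\<Union>j\<in>J. S j) = H \<inter> (\<Inter>j\<in>J. matching g (S j))"
  unfolding set_eq_iff Int_iff INT_iff mem_matching_iff by blast

lemma closedin_matching:
  assumes g: "g \<in> carrier P"
  shows "closedin Y (matching g S)"
proof -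
  have "closedin (T j) {x \<in> carrier (G j). inv\<^bsub>G j\<^esub> x \<otimes>\<^bsub>G j\<^esub> g j \<in> C j}" if j: "j \<in> I" for j
  proof -
    have "continuous_map (T j) (T j) (\<lambda>x. inv\<^bsub>G j\<^esub> x \<otimes>\<^bsub>G j\<^esub> g j)"
      using g j topspace_T[OF j]
      by (auto intro!: continuous_map_group_mult[OF topological_group_G[OF j]]
          continuous_map_group_inv[OF topological_group_G[OF j]])
    from closedin_continuous_map_preimage[OF this closedin_C[OF j]] show ?thesis
      by (simp add: topspace_T[OF j])
  qed
  then show ?thesis
    unfolding matching_def
    by (intro closedin_Int closedin_H)
      (auto simp: closedin_product_topology simp flip: topspace_T)
qed

lemma matching_extend:
  assumes g: "g \<in> carrier P" and i: "i \<in> I" and nonempty: "matching g {j. (j, i) \<in> R} \<noteq> {}"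
  shows "matching g (insert i {j. (j, i) \<in> R}) \<noteq> {}"
proof -
  interpret Gi: group "G i" using group_G[OF i] .
  obtain h where h: "h \<in> matching g {j. (j, i) \<in> R}"
    using nonempty by blast
  then have hH: "h \<in> H"
    by (simp add: mem_matching_iff)
  then have hi: "h i \<in> carrier (G i)" and gi: "g i \<in> carrier (G i)"
    using H_subset g i by auto
  have "inv\<^bsub>G i\<^esub> h i \<otimes>\<^bsub>G i\<^esub> g i \<in> leading i <#>\<^bsub>G i\<^esub> C i"
    using complement_C[OF i] hi gi by (simp add: permutable_complement_def)
  then obtain d c where d: "d \<in> leading i" and c: "c \<in> C i"
    and dc: "inv\<^bsub>G i\<^esub> h i \<otimes>\<^bsub>G i\<^esub> g i = d \<otimes>\<^bsub>G i\<^esub> c"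
    unfolding set_mult_def by blast
  obtain e where e: "e \<in> tail i" and de: "d = e i"
    using d by (auto simp: leading_def)
  have dG: "d \<in> carrier (G i)" and cG: "c \<in> carrier (G i)"
    using d c subgroup.subset[OF subgroup_leading[OF i]] subgroup.subset[OF subgroup_C[OF i]]
    by auto
  define h' where "h' = h \<otimes>\<^bsub>P\<^esub> e"
  have "h' \<in> H"
    unfolding h'_def using e
    by (intro subgroup.m_closed[OF subgroup_H hH]) (simp add: mem_tail_iff)
  moreover have "h' j = h j" if "j \<in> I" "(j, i) \<in> R" for j
    using that e hH H_subset group_G by (auto simp: h'_def mem_tail_iff PiE_iff group.is_monoid)
  moreover have "inv\<^bsub>G i\<^esub> h' i \<otimes>\<^bsub>G i\<^esub> g i = c"
  proof -
    have "inv\<^bsub>G i\<^esub> h' i \<otimes>\<^bsub>G i\<^esub> g i = inv\<^bsub>G i\<^esub> (h i \<otimes>\<^bsub>G i\<^esub> d) \<otimes>\<^bsub>G i\<^esub> g i"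
      using i de by (simp add: h'_def)
    also have "\<dots> = inv\<^bsub>G i\<^esub> d \<otimes>\<^bsub>G i\<^esub> (inv\<^bsub>G i\<^esub> h i \<otimes>\<^bsub>G i\<^esub> g i)"
      using hi dG gi by (simp add: Gi.inv_mult_group Gi.m_assoc)
    also have "\<dots> = c"
      using dG cG by (simp add: dc Gi.m_assoc[symmetric])
    finally show ?thesis .
  qed
  ultimately have "h' \<in> matching g (insert i {j. (j, i) \<in> R})"
    using h c by (auto simp: mem_matching_iff)
  then show ?thesis by blast
qed

lemma matching_nonempty_if_downward_closed:
  assumes g: "g \<in> carrier P" and J: "J \<subseteq> I" "\<And>j k. j \<in> J \<Longrightarrow> (k, j) \<in> R \<Longrightarrow> k \<in> J"
    and nonempty: "\<And>j. j \<in> J \<Longrightarrow> matching g (insert j {k. (k, j) \<in> R}) \<noteq> {}"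
  shows "matching g J \<noteq> {}"
proof -
  let ?M = "\<lambda>j. matching g (insert j {k. (k, j) \<in> R})"
  have trans: "trans R" and total: "total_on I R"
    using strict_linear_order_R by (simp_all add: strict_linear_order_on_def)
  have "matching g J = matching g (\<Union>j\<in>J. insert j {k. (k, j) \<in> R})"
    using J(2) by (intro arg_cong[where f = "matching g"]) blast
  also have "\<dots> = \<Inter>(insert H (?M ` J))"
    by (simp add: matching_UN)
  also have "\<dots> \<noteq> {}"
  proof (rule compact_space_chain_Inter_nonempty[OF compact_space_Y])
    show "closedin Y U \<and> U \<noteq> {}" if "U \<in> insert H (?M ` J)" for U
      using that closedin_H one_in_H closedin_matching[OF g] nonempty by auto
    have antimono: "?M j' \<subseteq> ?M j" if "(j, j') \<in> R" for j j'
      using that trans by (intro matching_antimono) (auto dest: transD)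
    have "?M j \<subseteq> ?M j' \<or> ?M j' \<subseteq> ?M j" if "j \<in> J" "j' \<in> J" for j j'
    proof -
      have "j = j' \<or> (j, j') \<in> R \<or> (j', j) \<in> R"
        using that J(1) total by (auto simp: total_on_def)
      then show ?thesis
        using antimono by blast
    qed
    then show "chain\<^sub>\<subseteq> (insert H (?M ` J))"
      using matching_subset unfolding chain_subset_def by blast
  qed
  finally show ?thesis .
qed

lemma matching_nonempty:
  assumes g: "g \<in> carrier P"
  shows "matching g I \<noteq> {}"
proof -
  have "matching g (insert i {j. (j, i) \<in> R}) \<noteq> {}" if "i \<in> I" for i
    using wf_R that
  proof (induction i rule: wf_induct_rule)
    case (less i)
    have "matching g {j. (j, i) \<in> R} \<noteq> {}"
    proof (rule matching_nonempty_if_downward_closed[OF g])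
      show "{j. (j, i) \<in> R} \<subseteq> I"
        using R_subset by blast
      show "k \<in> {j. (j, i) \<in> R}" if "j \<in> {j. (j, i) \<in> R}" "(k, j) \<in> R" for j k
        using that strict_linear_order_R by (auto simp: strict_linear_order_on_def dest: transD)
      show "matching g (insert j {k. (k, j) \<in> R}) \<noteq> {}" if "j \<in> {j. (j, i) \<in> R}" for j
        using that R_subset by (intro less.IH) auto
    qed
    then show ?case
      by (rule matching_extend[OF g less.prems])
  qed
  moreover have "k \<in> I" if "(k, j) \<in> R" for j k
    using that R_subset by blast
  ultimately show ?thesis
    by (intro matching_nonempty_if_downward_closed[OF g order_refl])
qed

lemma set_mult_PiE_C: "H <#>\<^bsub>P\<^esub> Pi\<^sub>E I C = carrier P"
proof
  interpret P: group P by (rule group_P)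
  show "H <#>\<^bsub>P\<^esub> Pi\<^sub>E I C \<subseteq> carrier P"
    using H_subset subgroup.subset[OF subgroup_PiE_C] by (rule P.set_mult_closed)
  show "carrier P \<subseteq> H <#>\<^bsub>P\<^esub> Pi\<^sub>E I C"
  proof
    fix g assume g: "g \<in> carrier P"
    obtain h where h: "h \<in> matching g I"
      using matching_nonempty[OF g] by blast
    then have hH: "h \<in> H"
      by (simp add: mem_matching_iff)
    then have hP: "h \<in> carrier P"
      using H_subset by blast
    have "inv\<^bsub>P\<^esub> h \<otimes>\<^bsub>P\<^esub> g \<in> Pi\<^sub>E I C"
      using h hP group_G by (simp add: mem_matching_iff)
    moreover have "g = h \<otimes>\<^bsub>P\<^esub> (inv\<^bsub>P\<^esub> h \<otimes>\<^bsub>P\<^esub> g)"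
      using P.inv_solve_left[of "inv\<^bsub>P\<^esub> h \<otimes>\<^bsub>P\<^esub> g" h g] hP g
      by (simp del: mult_product_group inv_product_group carrier_product_group)
    ultimately show "g \<in> H <#>\<^bsub>P\<^esub> Pi\<^sub>E I C"
      using hH unfolding set_mult_def by blast
  qed
qed

lemma permutable_complement_PiE_C: "permutable_complement P H (Pi\<^sub>E I C)"
  using subgroup_PiE_C set_mult_PiE_C Int_PiE_C by (simp add: permutable_complement_def)

end

lemma strict_well_order_on_exists:
  obtains R :: "'a rel" where "strict_linear_order_on A R" "wf R" "R \<subseteq> A \<times> A"
proof -
  obtain r :: "'a rel" where r: "well_order_on A r"
    using well_order_on by blast
  then have linear: "linear_order_on A r" and wf: "wf (r - Id)"
    by (simp_all add: well_order_on_def)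
  then have "r \<subseteq> A \<times> A"
    by (simp add: linear_order_on_def partial_order_onD(4))
  then show thesis
    using that[OF strict_linear_order_on_diff_Id[OF linear] wf] by blast
qed

lemma closed_complement_in_product:
  assumes C: "\<And>i. i \<in> I \<Longrightarrow> profinite_C_group (G i) (T i)"
    and H: "subgroup H (product_group I G)" "closedin (product_topology T I) H"
  shows "\<exists>K. closedin (product_topology T I) K \<and> permutable_complement (product_group I G) H K"
proof -
  obtain R where R: "strict_linear_order_on I R" "wf R" "R \<subseteq> I \<times> I"
    by (rule strict_well_order_on_exists)
  have "closed_subgroup_of_profinite_product I G T H R"
    using C H R by (simp add: closed_subgroup_of_profinite_product_def profinite_C_group_def)
  then interpret closed_subgroup_of_profinite_product I G T H R .
  have "\<forall>i\<in>I. \<exists>K. closedin (T i) K \<and> permutable_complement (G i) (leading i) K"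
    using C subgroup_leading closedin_leading unfolding profinite_C_group_def by blast
  then obtain K
    where K: "\<forall>i\<in>I. closedin (T i) (K i) \<and> permutable_complement (G i) (leading i) (K i)"
    by (rule bchoice[THEN exE])
  interpret closed_subgroup_of_profinite_product_complement I G T H R K
    using K by (intro closed_subgroup_of_profinite_product_complement.intro
        closed_subgroup_of_profinite_product_axioms
        closed_subgroup_of_profinite_product_complement_axioms.intro) simp_all
  show ?thesis
    using closedin_PiE_C permutable_complement_PiE_C by blast
qed

lemma profinite_C_group_product:
  assumes "\<And>i. i \<in> I \<Longrightarrow> profinite_C_group (G i) (T i)"
  shows "profinite_C_group (product_group I G) (product_topology T I)"
  unfolding profinite_C_group_def
proof (intro conjI allI impI)
  show "profinite_group (product_group I G) (product_topology T I)"
    using assms by (intro profinite_group_product) (simp add: profinite_C_group_def)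
  fix H assume H: "subgroup H (product_group I G) \<and> closedin (product_topology T I) H"
  show "\<exists>K. closedin (product_topology T I) K \<and> permutable_complement (product_group I G) H K"
    using closed_complement_in_product[OF assms conjunct1[OF H] conjunct2[OF H]] .
qed

section \<open>Closed subgroups and inverse limits\<close>

lemma topological_group_subgroup:
  assumes tg: "topological_group G T" and L: "subgroup L G"
  shows "topological_group (G\<lparr>carrier := L\<rparr>) (subtopology T L)"
proof -
  have G: "group G" and top: "topspace T = carrier G"
    and mult: "continuous_map (prod_topology T T) T (\<lambda>(x, y). x \<otimes>\<^bsub>G\<^esub> y)"
    and inv: "continuous_map T T (\<lambda>x. inv\<^bsub>G\<^esub> x)"
    using tg by (simp_all add: topological_group_def)
  have topL: "topspace (subtopology T L) = L"
    using subgroup.subset[OF L] top by auto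
  have "continuous_map (subtopology (prod_topology T T) (L \<times> L)) (subtopology T L)
      (\<lambda>(x, y). x \<otimes>\<^bsub>G\<^esub> y)"
    using subgroup.m_closed[OF L]
    by (intro continuous_map_into_subtopology continuous_map_from_subtopology[OF mult]) auto
  moreover have "continuous_map (subtopology T L) (subtopology T L) (\<lambda>x. inv\<^bsub>G\<^esub> x)"
    using subgroup.m_inv_closed[OF L] topL
    by (intro continuous_map_into_subtopology continuous_map_from_subtopology[OF inv]) auto
  then have "continuous_map (subtopology T L) (subtopology T L) (\<lambda>x. inv\<^bsub>G\<lparr>carrier := L\<rparr>\<^esub> x)"
    by (rule continuous_map_eq) (simp add: group.m_inv_consistent[OF G L])
  ultimately show ?thesis
    using topL subgroup.subgroup_is_group[OF L G]
    by (simp add: topological_group_def subtopology_Times)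
qed

lemma profinite_group_closed_subgroup:
  assumes pf: "profinite_group G T" and L: "subgroup L G" "closedin T L"
  shows "profinite_group (G\<lparr>carrier := L\<rparr>) (subtopology T L)"
  using pf topological_group_subgroup[OF _ L(1)] closedin_compact_space[OF _ L(2)]
  by (auto simp: profinite_group_def compact_space_subtopology Hausdorff_space_subtopology
      totally_disconnected_space_def connectedin_subtopology)

lemma (in group) permutable_complement_subgroup:
  assumes HK: "permutable_complement G H K" and L: "subgroup L G" "H \<subseteq> L"
  shows "permutable_complement (G\<lparr>carrier := L\<rparr>) H (K \<inter> L)"
proof -
  have K: "subgroup K G" and prod: "H <#> K = carrier G" and meet: "H \<inter> K = {\<one>}"
    using HK by (simp_all add: permutable_complement_def)
  have "L \<subseteq> H <#> (K \<inter> L)"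
  proof
    fix l assume l: "l \<in> L"
    then obtain h k where h: "h \<in> H" and k: "k \<in> K" and lhk: "l = h \<otimes> k"
      using prod subgroup.subset[OF L(1)] unfolding set_mult_def by blast
    have hG: "h \<in> carrier G" and kG: "k \<in> carrier G"
      using h k L(2) subgroup.subset[OF L(1)] subgroup.subset[OF K] by auto
    have "k = inv h \<otimes> l"
      using inv_solve_left[OF kG hG] lhk l subgroup.subset[OF L(1)] by auto
    then have "k \<in> L"
      using h l L by (simp add: subgroup.m_closed subgroup.m_inv_closed subset_iff)
    with h k lhk show "l \<in> H <#> (K \<inter> L)"
      unfolding set_mult_def by blast
  qed
  moreover have "H <#> (K \<inter> L) \<subseteq> L"
    using L unfolding set_mult_def by (auto intro: subgroup.m_closed)
  ultimately have "H <#>\<^bsub>G\<lparr>carrier := L\<rparr>\<^esub> (K \<inter> L) = carrier (G\<lparr>carrier := L\<rparr>)"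
    by (simp add: set_mult_def)
  moreover have "subgroup (K \<inter> L) (G\<lparr>carrier := L\<rparr>)"
    using subgroup_Int[OF K L(1)] L(1) by (rule subgroup_incl) blast
  ultimately show ?thesis
    using meet L by (auto simp: permutable_complement_def)
qed

lemma profinite_C_group_closed_subgroup:
  assumes C: "profinite_C_group G T" and L: "subgroup L G" "closedin T L"
  shows "profinite_C_group (G\<lparr>carrier := L\<rparr>) (subtopology T L)"
  unfolding profinite_C_group_def
proof (intro conjI allI impI)
  have pf: "profinite_group G T"
    using C by (simp add: profinite_C_group_def)
  then show "profinite_group (G\<lparr>carrier := L\<rparr>) (subtopology T L)"
    using L by (rule profinite_group_closed_subgroup)
  have G: "group G"
    using pf by (simp add: profinite_group_def topological_group_def)
  fix H assume H: "subgroup H (G\<lparr>carrier := L\<rparr>) \<and> closedin (subtopology T L) H"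
  then have "subgroup H G" "closedin T H" "H \<subseteq> L"
    using group.incl_subgroup[OF G L(1)] closedin_trans_full[OF _ L(2)] subgroup.subset by force+
  then obtain K where "closedin T K" "permutable_complement G H K"
    using C by (auto simp: profinite_C_group_def)
  then show "\<exists>K. closedin (subtopology T L) K \<and> permutable_complement (G\<lparr>carrier := L\<rparr>) H K"
    using group.permutable_complement_subgroup[OF G _ L(1) \<open>H \<subseteq> L\<close>]
    by (metis closedin_subtopology_Int_closed inf_commute)
qed

lemma subgroup_equalizer:
  assumes "group G" "group K" "\<phi> \<in> hom G K" "\<psi> \<in> hom G K"
  shows "subgroup {x \<in> carrier G. \<phi> x = \<psi> x} G"
proof -
  interpret \<phi>: group_hom G K \<phi>
    using assms by (simp add: group_hom_def group_hom_axioms_def)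
  interpret \<psi>: group_hom G K \<psi>
    using assms by (simp add: group_hom_def group_hom_axioms_def)
  show ?thesis
    by (rule group.subgroupI[OF assms(1)])
      (auto simp: \<phi>.hom_mult \<psi>.hom_mult \<phi>.hom_inv \<psi>.hom_inv)
qed

lemma inv_limit_carrier_eq_Inter:
  "inv_limit_carrier I leq G f =
     \<Inter>(insert (carrier (product_group I G))
        ((\<lambda>(i, j). {x \<in> carrier (product_group I G). f i j (x i) = x j}) ` {(i, j) \<in> I \<times> I. leq j i}))"
  by (auto simp: inv_limit_carrier_def)

lemma inverse_systemD:
  assumes "inverse_system I leq G T f"
  shows inverse_system_topological_group: "i \<in> I \<Longrightarrow> topological_group (G i) (T i)"
    and inverse_system_hom: "i \<in> I \<Longrightarrow> j \<in> I \<Longrightarrow> leq j i \<Longrightarrow> f i j \<in> hom (G i) (G j)"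
    and inverse_system_continuous_map:
      "i \<in> I \<Longrightarrow> j \<in> I \<Longrightarrow> leq j i \<Longrightarrow> continuous_map (T i) (T j) (f i j)"
  using assms unfolding inverse_system_def by blast+

lemma subgroup_inv_limit_carrier:
  assumes "inverse_system I leq G T f"
  shows "subgroup (inv_limit_carrier I leq G f) (product_group I G)"
proof -
  have group: "group (G i)" if "i \<in> I" for i
    using inverse_system_topological_group[OF assms that] by (simp add: topological_group_def)
  have "subgroup {x \<in> carrier (product_group I G). f i j (x i) = x j} (product_group I G)"
    if "i \<in> I" "j \<in> I" "leq j i" for i j
  proof (rule subgroup_equalizer)
    from inverse_system_hom[OF assms that]
    show "(\<lambda>x. f i j (x i)) \<in> hom (product_group I G) (G j)"
      using that by (auto simp: hom_def PiE_iff group.is_monoid group)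
    show "(\<lambda>x. x j) \<in> hom (product_group I G) (G j)"
      using that by (auto simp: hom_def)
  qed (simp_all add: group that)
  moreover have "subgroup (carrier (product_group I G)) (product_group I G)"
    by (intro group.subgroup_self product_group group)
  ultimately show ?thesis
    unfolding inv_limit_carrier_eq_Inter by (intro subgroup_Inter) auto
qed

lemma closedin_inv_limit_carrier:
  assumes sys: "inverse_system I leq G T f"
    and Hausdorff: "\<And>i. i \<in> I \<Longrightarrow> Hausdorff_space (T i)"
  shows "closedin (product_topology T I) (inv_limit_carrier I leq G f)"
proof -
  have topspace: "topspace (product_topology T I) = carrier (product_group I G)"
    using inverse_system_topological_group[OF sys] by (rule topspace_product_topology_group)
  have "closedin (product_topology T I) {x \<in> topspace (product_topology T I). f i j (x i) = x j}"
    if "i \<in> I" "j \<in> I" "leq j i" for i j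
  proof (rule closedin_continuous_maps_eq[OF Hausdorff[OF that(2)]])
    from continuous_map_compose[OF continuous_map_product_projection[of i I T, OF that(1)]
        inverse_system_continuous_map[OF sys that]]
    show "continuous_map (product_topology T I) (T j) (\<lambda>x. f i j (x i))"
      by (simp add: o_def)
  qed (rule continuous_map_product_projection[OF that(2)])
  moreover have "closedin (product_topology T I) (topspace (product_topology T I))"
    by (rule closedin_topspace)
  ultimately show ?thesis
    unfolding inv_limit_carrier_eq_Inter topspace[symmetric] by (intro closedin_Inter) auto
qed

lemma profinite_C_group_inv_limit:
  assumes sys: "inverse_system I leq G T f"
    and C: "\<And>i. i \<in> I \<Longrightarrow> profinite_C_group (G i) (T i)"
  shows "profinite_C_group (inv_limit_group I leq G f) (inv_limit_topology I leq G T f)"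
proof -
  have "Hausdorff_space (T i)" if "i \<in> I" for i
    using C[OF that] by (simp add: profinite_C_group_def profinite_group_def)
  then show ?thesis
    unfolding inv_limit_group_def inv_limit_topology_def
    by (intro profinite_C_group_closed_subgroup[OF profinite_C_group_product[OF C]]
        subgroup_inv_limit_carrier[OF sys] closedin_inv_limit_carrier[OF sys])
qed

theorem theorem2p4:
  shows "(\<forall>(I :: 'i set) (G :: 'i \<Rightarrow> ('a, 'b) monoid_scheme) (T :: 'i \<Rightarrow> 'a topology).
            (\<forall>i\<in>I. profinite_C_group (G i) (T i)) \<longrightarrow>
            profinite_C_group (product_group I G) (product_topology T I))
       \<and> (\<forall>(I :: 'j set) leq (G :: 'j \<Rightarrow> ('c, 'd) monoid_scheme) (T :: 'j \<Rightarrow> 'c topology) f.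
            inverse_system I leq G T f \<and> (\<forall>i\<in>I. profinite_C_group (G i) (T i)) \<longrightarrow>
            profinite_C_group (inv_limit_group I leq G f) (inv_limit_topology I leq G T f))"
  by (blast intro: profinite_C_group_product profinite_C_group_inv_limit)

end
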